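(* The expected cost of the direct referral reward scheme on the chain defined in the context is $\Theta(P_h^2\,n\,h^2)$.
   Context: Chain with agents at positions $1,2,\dots$, each independently holding an answer with probability $p=1/n$; $h\ge1$. $r(i,s)$ is the reward to the agent at position $i$ when the first answer is at position $i+s\le h$; if there is no answer among positions $1,\dots,h$ nothing is paid. Let $P_i=\sum_{j=1}^i p(1-p)^{j-1}$ and $R_i=\sum_{s=1}^{h-i} r(i,s)p(1-p)^{s-1}$ (so $R_h=0$). The scheme is defined backwards by: $r(i,1)=nR_{i+1}+P_{h-i-1}$ for $i\le h-1$; $r(i,0)=\sum_{t=i}^{h-1}r(t,1)+1$ for $1\le i\le h$; $r(i,s)=1$ if $i+s\le h$ and $s>1$; $r(i,s)=0$ otherwise. The expected cost is $\mathbb{E}[\sum_{i=1}^{J}r(i,J-i)]$ where $J$ is the position of the first answer if $J\le h$ (empty sum otherwise). *)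

theory Defs
  imports Complex_Main
begin

text \<open>Chain with agents at positions 1,2,..., each holding an answer independently
  with probability p = 1/n.  Horizon h.\<close>

definition prob :: "nat \<Rightarrow> real" where
  "prob n = 1 / real n"

definition Pc :: "nat \<Rightarrow> nat \<Rightarrow> real" where
  "Pc n i = (\<Sum>j=1..i. prob n * (1 - prob n) ^ (j - 1))"

text \<open>The direct referral reward scheme: reward n h i s = r(i,s), the reward paid to
  the agent at position i when the first answer is at position i+s.
  r(i,1) = n R_{i+1} + P_{h-i-1} (i \<le> h-1), with
  R_{i+1} = sum_{s=1}^{h-(i+1)} r(i+1,s) p (1-p)^(s-1);
  r(i,0) = sum_{t=i}^{h-1} r(t,1) + 1 (1 \<le> i \<le> h);
  r(i,s) = 1 if i+s \<le> h and s > 1; 0 otherwise.\<close>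
function reward :: "nat \<Rightarrow> nat \<Rightarrow> nat \<Rightarrow> nat \<Rightarrow> real" where
  "reward n h i s =
    (if 1 \<le> i \<and> i + s \<le> h then
       (if s = 0 then (\<Sum>t=i..h-1. reward n h t 1) + 1
        else if s = 1 then
          real n * (\<Sum>s'=1..h-(i+1). reward n h (i+1) s' * prob n * (1 - prob n) ^ (s' - 1))
          + Pc n (h - i - 1)
        else 1)
     else 0)"
  by pat_completeness auto
termination
  by (relation "measure (\<lambda>(n,h,i,s). 2*(h-i) + (if s = 0 then 1 else 0))") auto

definition Rc :: "nat \<Rightarrow> nat \<Rightarrow> nat \<Rightarrow> real" where
  "Rc n h i = (\<Sum>s=1..h-i. reward n h i s * prob n * (1 - prob n) ^ (s - 1))"

text \<open>Expected cost E[sum_{i=1}^J r(i,J-i)], J the position of the first answer,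
  which equals j with probability p(1-p)^(j-1); nothing is paid if J > h.\<close>
definition expected_cost :: "nat \<Rightarrow> nat \<Rightarrow> real" where
  "expected_cost n h =
     (\<Sum>j=1..h. prob n * (1 - prob n) ^ (j - 1) * (\<Sum>i=1..j. reward n h i (j - i)))"

end

theory Submission
  imports Defs
begin

text \<open>
  With \<open>q = 1 - p\<close> we have \<open>P\<^sub>k = 1 - q\<^sup>k\<close>, and the recursion for \<open>r(i,1)\<close> telescopes:
  \<open>r(i,1) - r(i+1,1) = (n+1) P\<^bsub>h-i-1\<^esub> - 1\<close>.  Each such increment lies between
  \<open>n P\<^bsub>k-1\<^esub>\<close>, which is at least \<open>(k-1) n P\<^sub>h / h\<close> because \<open>P\<^sub>k / k\<close> decreases, and
  \<open>(n+1) P\<^sub>h\<close>.  Summing twice, \<open>r(j,0)\<close> lies between \<open>(n P\<^sub>h / h) C(h-j,3)\<close> and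
  \<open>h\<^sup>2 (n+1) P\<^sub>h\<close>, while every other reward is at most \<open>r(i,1) + 1\<close>.  For the upper bound,
  the total payment given an answer in \<open>{1..h}\<close> is \<open>O(h\<^sup>2 n P\<^sub>h + h)\<close>, and \<open>n P\<^sub>h \<ge> 1\<close>.
  For the lower bound, both the probability of the first answer being at \<open>j\<close> and \<open>r(j,0)\<close>
  decrease in \<open>j\<close>, so Chebyshev's sum inequality bounds the expected cost below by
  \<open>(P\<^sub>h / h) \<Sum>\<^sub>j r(j,0) \<ge> (P\<^sub>h / h)(n P\<^sub>h / h) C(h,4)\<close>, which is of order \<open>n P\<^sub>h\<^sup>2 h\<^sup>2\<close>.
\<close>

lemma one_minus_power_ratio_antimono:
  fixes q :: real
  assumes "0 \<le> q" "q \<le> 1" "m \<le> k"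
  shows "real m * (1 - q ^ k) \<le> real k * (1 - q ^ m)"
proof -
  have head: "real m * q ^ m \<le> (\<Sum>i<m. q ^ i)"
    using sum_mono[of "{..<m}" "\<lambda>_. q ^ m" "\<lambda>i. q ^ i"] assms by (simp add: power_decreasing)
  have tail: "(\<Sum>i=m..<k. q ^ i) \<le> real (k - m) * q ^ m"
    using sum_mono[of "{m..<k}" "\<lambda>i. q ^ i" "\<lambda>_. q ^ m"] assms by (simp add: power_decreasing)
  have split: "(\<Sum>i<k. q ^ i) = (\<Sum>i<m. q ^ i) + (\<Sum>i=m..<k. q ^ i)"
    using sum.atLeastLessThan_concat[of 0 m k "\<lambda>i. q ^ i"] assms by (simp add: atLeast0LessThan)
  have "real m * (\<Sum>i<k. q ^ i) \<le> real m * (\<Sum>i<m. q ^ i) + real m * (real (k - m) * q ^ m)"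
    unfolding split distrib_left using tail by (intro add_left_mono mult_left_mono) auto
  also have "\<dots> \<le> real m * (\<Sum>i<m. q ^ i) + real (k - m) * (\<Sum>i<m. q ^ i)"
    using mult_left_mono[OF head, of "real (k - m)"] by (simp add: mult.left_commute)
  also have "\<dots> = real k * (\<Sum>i<m. q ^ i)"
    using assms by (simp add: of_nat_diff algebra_simps)
  finally have "(1 - q) * (real m * (\<Sum>i<k. q ^ i)) \<le> (1 - q) * (real k * (\<Sum>i<m. q ^ i))"
    using assms by (intro mult_left_mono) auto
  then show ?thesis by (simp add: one_diff_power_eq mult.left_commute)
qed

lemma sum_choose_three_reversed: "(\<Sum>k<h. (h - Suc k) choose 3) = h choose 4"
proof (cases h)
  case (Suc m)
  have "(\<Sum>k<h. (h - Suc k) choose 3) = (\<Sum>k<h. k choose 3)"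
    by (rule sum.nat_diff_reindex)
  also have "\<dots> = (\<Sum>k\<le>m. k choose 3)"
    using Suc by (simp add: lessThan_Suc_atMost)
  finally show ?thesis
    using Suc by (simp add: sum_choose_upper)
qed simp

lemma choose_four_lower_bound:
  fixes c :: real
  assumes c: "0 \<le> c" "c \<le> 1"
  shows "c * real h ^ 4 / 256 \<le> c * real (h choose 4) + real h"
proof (cases "4 \<le> h")
  case True
  have "real h ^ 4 / 256 \<le> real (h choose 4)"
    using binomial_ge_n_over_k_pow_k[OF True, where 'a = real] by (simp add: power_divide)
  then have "c * (real h ^ 4 / 256) \<le> c * real (h choose 4)"
    using c(1) by (rule mult_left_mono)
  then show ?thesis by simp
next
  case False
  then have "real h ^ 3 \<le> 3 ^ 3"
    by (intro power_mono) auto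
  then have "real h ^ 4 \<le> 27 * real h"
    using mult_left_mono[of "real h ^ 3" 27 "real h"] by (simp add: power_Suc[symmetric] del: power_Suc)
  moreover have "c * real h ^ 4 \<le> real h ^ 4"
    using c mult_right_mono[OF c(2), of "real h ^ 4"] by simp
  ultimately have "c * real h ^ 4 / 256 \<le> real h"
    by linarith
  moreover have "0 \<le> c * real (h choose 4)"
    using c by simp
  ultimately show ?thesis
    by linarith
qed

declare reward.simps [simp del]

lemma reward_zero: "1 \<le> i \<Longrightarrow> i \<le> h \<Longrightarrow> reward n h i 0 = (\<Sum>t=i..h-1. reward n h t 1) + 1"
  by (subst reward.simps) simp

lemma reward_one: "1 \<le> i \<Longrightarrow> i + 1 \<le> h \<Longrightarrow> reward n h i 1 =
    real n * (\<Sum>s=1..h-(i+1). reward n h (i+1) s * prob n * (1 - prob n) ^ (s - 1)) + Pc n (h - i - 1)"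
  by (subst reward.simps) simp

lemma reward_ge_two: "1 \<le> i \<Longrightarrow> i + s \<le> h \<Longrightarrow> 2 \<le> s \<Longrightarrow> reward n h i s = 1"
  by (subst reward.simps) simp

lemma reward_outside: "\<not> (1 \<le> i \<and> i + s \<le> h) \<Longrightarrow> reward n h i s = 0"
  by (subst reward.simps, rule if_not_P)

lemma prob_nonneg: "0 \<le> prob n"
  by (simp add: prob_def)

lemma prob_le_one: "prob n \<le> 1"
  by (cases n) (simp_all add: prob_def)

lemma Pc_0 [simp]: "Pc n 0 = 0"
  by (simp add: Pc_def)

lemma Pc_Suc: "Pc n (Suc m) = Pc n m + prob n * (1 - prob n) ^ m"
  by (simp add: Pc_def)

lemma Pc_eq: "Pc n m = 1 - (1 - prob n) ^ m"
  by (induction m) (simp_all add: Pc_Suc algebra_simps)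

lemma Pc_nonneg: "0 \<le> Pc n m"
  using prob_nonneg[of n] prob_le_one[of n] by (simp add: Pc_eq power_le_one)

lemma Pc_mono: "m \<le> k \<Longrightarrow> Pc n m \<le> Pc n k"
  using prob_nonneg prob_le_one by (simp add: Pc_eq power_decreasing)

lemma Pc_ratio_antimono: "m \<le> k \<Longrightarrow> real m * Pc n k \<le> real k * Pc n m"
  unfolding Pc_eq using prob_nonneg prob_le_one by (intro one_minus_power_ratio_antimono) auto

lemma of_nat_mult_Pc_le: "real n * Pc n m \<le> real m"
proof (cases "n = 0")
  case False
  have "1 + real m * (- prob n) \<le> (1 - prob n) ^ m"
    using Bernoulli_inequality[of "- prob n" m] prob_le_one by simp
  then have "real n * Pc n m \<le> real n * (real m * prob n)"
    unfolding Pc_eq by (intro mult_left_mono) auto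
  with False show ?thesis by (simp add: prob_def)
qed simp

lemma one_le_of_nat_mult_Pc: "1 \<le> n \<Longrightarrow> 1 \<le> m \<Longrightarrow> 1 \<le> real n * Pc n m"
  using Pc_mono[of 1 m n] by (simp add: Pc_def prob_def field_simps)

lemma reward_one_last: "1 \<le> i \<Longrightarrow> i + 1 = h \<Longrightarrow> reward n h i 1 = 0"
  by (subst reward_one) auto

lemma reward_zero_step: "1 \<le> j \<Longrightarrow> j + 1 \<le> h \<Longrightarrow> reward n h j 0 = reward n h j 1 + reward n h (j + 1) 0"
  using sum.atLeast_Suc_atMost[of j "h - 1" "\<lambda>t. reward n h t 1"] by (simp add: reward_zero)

context
  fixes n :: nat
  assumes n: "1 \<le> n"
begin

lemma reward_one_step:
  assumes i: "1 \<le> i" "i + 1 + Suc k = h"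
  shows "reward n h i 1 = reward n h (i + 1) 1 + ((real n + 1) * Pc n (Suc k) - 1)"
proof -
  define f where "f s = reward n h (i + 1) s * prob n * (1 - prob n) ^ (s - 1)" for s
  \<comment> \<open>in \<open>R\<^bsub>i+1\<^esub>\<close> every reward except \<open>r(i+1,1)\<close> equals 1\<close>
  have "(\<Sum>s=Suc 1..Suc k. f s) = (\<Sum>s=Suc 1..Suc k. prob n * (1 - prob n) ^ (s - 1))"
    by (rule sum.cong) (use i in \<open>auto simp: f_def reward_ge_two\<close>)
  also have "\<dots> = Pc n (Suc k) - prob n"
    using sum.atLeast_Suc_atMost[of 1 "Suc k" "\<lambda>j. prob n * (1 - prob n) ^ (j - 1)"]
    by (simp add: Pc_def)
  finally have "(\<Sum>s=1..Suc k. f s) = reward n h (i + 1) 1 * prob n + Pc n (Suc k) - prob n"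
    using sum.atLeast_Suc_atMost[of 1 "Suc k" f] by (simp add: f_def)
  moreover have "h - (i + 1) = Suc k" "h - i - 1 = Suc k"
    using i(2) by auto
  ultimately have "reward n h i 1 = real n * (reward n h (i + 1) 1 * prob n + Pc n (Suc k) - prob n) + Pc n (Suc k)"
    using i reward_one[of i h n] unfolding f_def by (simp only:)
  also have "\<dots> = reward n h (i + 1) 1 * (real n * prob n) + (real n + 1) * Pc n (Suc k) - real n * prob n"
    by (simp add: algebra_simps)
  finally show ?thesis
    using n by (simp add: prob_def)
qed

lemma Pc_Suc_increment_ge: "real n * Pc n k \<le> (real n + 1) * Pc n (Suc k) - 1"
  using n Pc_mono[of k "Suc k" n] by (simp add: Pc_eq prob_def field_simps)

lemma reward_one_upper: "1 \<le> i \<Longrightarrow> i + 1 + k = h \<Longrightarrow> reward n h i 1 \<le> real k * ((real n + 1) * Pc n h)"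
proof (induction k arbitrary: i)
  case 0
  then show ?case using reward_one_last[of i h n] by simp
next
  case (Suc k)
  have "(real n + 1) * Pc n (Suc k) \<le> (real n + 1) * Pc n h"
    using Suc.prems Pc_mono[of "Suc k" h n] by (intro mult_left_mono) auto
  moreover have "reward n h i 1 = reward n h (i + 1) 1 + ((real n + 1) * Pc n (Suc k) - 1)"
    using Suc.prems by (rule reward_one_step)
  ultimately show ?case
    using Suc.IH[of "i + 1"] Suc.prems by (simp add: algebra_simps)
qed

lemma reward_one_lower:
  "1 \<le> i \<Longrightarrow> i + 1 + k = h \<Longrightarrow> real n * Pc n h / real h * real (k choose 2) \<le> reward n h i 1"
proof (induction k arbitrary: i)
  case 0
  then show ?case using reward_one_last[of i h n] by (simp add: numeral_2_eq_2)
next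
  case (Suc k)
  have "real n * (real k * Pc n h) \<le> real n * (real h * Pc n k)"
    using Suc.prems Pc_ratio_antimono[of k h n] by (intro mult_left_mono) auto
  then have "real n * Pc n h / real h * real k \<le> real n * Pc n k"
    using Suc.prems by (simp add: field_simps)
  also have "\<dots> \<le> (real n + 1) * Pc n (Suc k) - 1"
    by (rule Pc_Suc_increment_ge)
  finally have "real n * Pc n h / real h * real k \<le> (real n + 1) * Pc n (Suc k) - 1" .
  moreover have "reward n h i 1 = reward n h (i + 1) 1 + ((real n + 1) * Pc n (Suc k) - 1)"
    using Suc.prems by (rule reward_one_step)
  moreover have "real (Suc k choose 2) = real k + real (k choose 2)"
    by (simp add: numeral_2_eq_2)
  ultimately show ?case
    using Suc.IH[of "i + 1"] Suc.prems by (simp add: distrib_left)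
qed

lemma reward_one_nonneg: "0 \<le> reward n h i 1"
proof (cases "1 \<le> i \<and> i + 1 \<le> h")
  case True
  have "0 \<le> real n * Pc n h / real h * real ((h - i - 1) choose 2)"
    using Pc_nonneg[of n h] by simp
  also have "\<dots> \<le> reward n h i 1"
    using True by (intro reward_one_lower) auto
  finally show ?thesis .
qed (simp add: reward_outside)

lemma reward_zero_lower:
  "1 \<le> j \<Longrightarrow> j + k = h \<Longrightarrow> real n * Pc n h / real h * real (k choose 3) + 1 \<le> reward n h j 0"
proof (induction k arbitrary: j)
  case 0
  then show ?case by (simp add: reward_zero numeral_3_eq_3)
next
  case (Suc k)
  have "real (Suc k choose 3) = real (k choose 2) + real (k choose 3)"
    by (simp add: numeral_3_eq_3 numeral_2_eq_2)
  then show ?case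
    using reward_zero_step[of j h] reward_one_lower[of j k h] Suc.IH[of "j + 1"] Suc.prems
    by (simp add: distrib_left)
qed

lemma reward_zero_upper:
  assumes "1 \<le> j" "j \<le> h"
  shows "reward n h j 0 \<le> real (h - j) * (real h * ((real n + 1) * Pc n h)) + 1"
proof -
  have "(\<Sum>t=j..h-1. reward n h t 1) \<le> (\<Sum>t=j..h-1. real h * ((real n + 1) * Pc n h))"
  proof (rule sum_mono)
    fix t assume t: "t \<in> {j..h-1}"
    then have "reward n h t 1 \<le> real (h - t - 1) * ((real n + 1) * Pc n h)"
      using assms by (intro reward_one_upper) auto
    also have "\<dots> \<le> real h * ((real n + 1) * Pc n h)"
      using Pc_nonneg[of n h] by (intro mult_right_mono) auto
    finally show "reward n h t 1 \<le> real h * ((real n + 1) * Pc n h)" .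
  qed
  then show ?thesis
    using assms by (simp add: reward_zero)
qed

lemma reward_nonneg: "0 \<le> reward n h i s"
proof -
  consider "\<not> (1 \<le> i \<and> i + s \<le> h)" | "1 \<le> i" "i + s \<le> h" "s = 0"
    | "s = 1" | "1 \<le> i" "i + s \<le> h" "2 \<le> s"
    by linarith
  then show ?thesis
  proof cases
    case 2
    have "0 \<le> (\<Sum>t=i..h-1. reward n h t 1)" by (intro sum_nonneg reward_one_nonneg)
    with 2 show ?thesis by (simp add: reward_zero)
  qed (use reward_one_nonneg[of h i] in \<open>simp_all add: reward_outside reward_ge_two\<close>)
qed

lemma reward_le:
  assumes "1 \<le> s"
  shows "reward n h i s \<le> real h * ((real n + 1) * Pc n h) + 1"
proof -
  have A: "0 \<le> real h * ((real n + 1) * Pc n h)" using Pc_nonneg[of n h] by simp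
  consider "\<not> (1 \<le> i \<and> i + s \<le> h)" | "1 \<le> i" "i + s \<le> h" "s = 1"
    | "1 \<le> i" "i + s \<le> h" "2 \<le> s"
    using assms by linarith
  then show ?thesis
  proof cases
    case 2
    then have "reward n h i 1 \<le> real (h - i - 1) * ((real n + 1) * Pc n h)"
      by (intro reward_one_upper) auto
    also have "\<dots> \<le> real h * ((real n + 1) * Pc n h)"
      using Pc_nonneg[of n h] by (intro mult_right_mono) auto
    finally show ?thesis using 2 by simp
  qed (use A in \<open>simp_all add: reward_outside reward_ge_two\<close>)
qed

lemma sum_reward_split:
  "1 \<le> j \<Longrightarrow> (\<Sum>i=1..j. reward n h i (j - i)) = (\<Sum>i=1..j-1. reward n h i (j - i)) + reward n h j 0"
  by (cases j) simp_all

lemma sum_reward_upper: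
  assumes j: "1 \<le> j" "j \<le> h"
  shows "(\<Sum>i=1..j. reward n h i (j - i)) \<le> real h * (real h * ((real n + 1) * Pc n h) + 1)"
proof -
  define A where "A = real h * ((real n + 1) * Pc n h)"
  have A: "0 \<le> A" using Pc_nonneg[of n h] by (simp add: A_def)
  have "(\<Sum>i=1..j-1. reward n h i (j - i)) \<le> (\<Sum>i=1..j-1. A + 1)"
    by (rule sum_mono) (auto simp: A_def intro: reward_le)
  moreover have "reward n h j 0 \<le> real (h - j) * A + 1"
    using reward_zero_upper[OF j] by (simp add: A_def)
  moreover have "real (j - 1) * (A + 1) + (real (h - j) * A + 1) \<le> real h * (A + 1)"
    using j A by (simp add: of_nat_diff algebra_simps)
  ultimately show ?thesis
    using sum_reward_split[OF j(1)] by (simp add: A_def)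
qed

lemma sum_reward_lower:
  assumes j: "1 \<le> j" "j \<le> h"
  shows "real n * Pc n h / real h * real ((h - j) choose 3) + 1 \<le> (\<Sum>i=1..j. reward n h i (j - i))"
  using sum_reward_split[OF j(1)] reward_zero_lower[of j "h - j" h] j
    sum_nonneg[of "{1..j-1}" "\<lambda>i. reward n h i (j - i)", OF reward_nonneg]
  by simp

lemma expected_cost_upper:
  assumes h: "1 \<le> h"
  shows "expected_cost n h \<le> 3 * ((Pc n h)\<^sup>2 * real n * (real h)\<^sup>2)"
proof -
  define P where "P = Pc n h"
  have P: "0 \<le> P" "1 \<le> real n * P" using Pc_nonneg one_le_of_nat_mult_Pc[OF n h] by (auto simp: P_def)
  have "expected_cost n h \<le> (\<Sum>j=1..h. prob n * (1 - prob n) ^ (j - 1) * (real h * (real h * ((real n + 1) * P) + 1)))"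
    unfolding expected_cost_def P_def
    using prob_nonneg[of n] prob_le_one[of n]
    by (intro sum_mono mult_left_mono sum_reward_upper) auto
  also have "\<dots> = P * (real h * (real h * ((real n + 1) * P) + 1))"
    unfolding P_def Pc_def by (simp add: sum_distrib_right)
  also have "\<dots> = (real n + 1) * P\<^sup>2 * (real h)\<^sup>2 + P * real h"
    by (simp add: power2_eq_square algebra_simps)
  also have "\<dots> \<le> 2 * real n * P\<^sup>2 * (real h)\<^sup>2 + P * real h * (real n * P * real h)"
  proof (intro add_mono)
    show "(real n + 1) * P\<^sup>2 * (real h)\<^sup>2 \<le> 2 * real n * P\<^sup>2 * (real h)\<^sup>2"
      using n by (intro mult_right_mono) auto
    have "1 \<le> real n * P * real h"
      using P h mult_mono[OF P(2), of 1 "real h"] by simp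
    then show "P * real h \<le> P * real h * (real n * P * real h)"
      using P mult_left_mono[of 1 "real n * P * real h" "P * real h"] by simp
  qed
  finally show ?thesis
    by (simp add: P_def power2_eq_square algebra_simps)
qed

lemma expected_cost_lower:
  assumes h: "1 \<le> h"
  shows "1 / 256 * ((Pc n h)\<^sup>2 * real n * (real h)\<^sup>2) \<le> expected_cost n h"
proof -
  define c where "c = real n * Pc n h / real h"
  define w where "w k = prob n * (1 - prob n) ^ k" for k
  define g where "g k = c * real ((h - Suc k) choose 3) + 1" for k
  have c: "0 \<le> c" "c \<le> 1"
    using h Pc_nonneg[of n h] of_nat_mult_Pc_le[of n h] by (auto simp: c_def)
  have "(\<Sum>k=0..<h. w k * g k) =
      (\<Sum>j=1..h. prob n * (1 - prob n) ^ (j - 1) * (c * real ((h - j) choose 3) + 1))"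
    by (simp add: sum.atLeast1_atMost_eq atLeast0LessThan w_def g_def)
  also have "\<dots> \<le> expected_cost n h"
    unfolding expected_cost_def c_def
    using prob_nonneg[of n] prob_le_one[of n]
    by (intro sum_mono mult_left_mono sum_reward_lower) auto
  finally have "(\<Sum>k=0..<h. w k * g k) \<le> expected_cost n h" .
  moreover have "real h * (\<Sum>k=0..<h. - w k * g k) \<le> (\<Sum>k=0..<h. - w k) * (\<Sum>k=0..<h. g k)"
  proof (rule Chebyshev_sum_upper)
    show "- w i \<le> - w j" if "i \<le> j" "j < h" for i j
      using that prob_nonneg[of n] prob_le_one[of n] by (simp add: w_def mult_left_mono power_decreasing)
    show "g j \<le> g i" if "i \<le> j" "j < h" for i j
      using that c by (simp add: g_def mult_left_mono binomial_right_mono)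
  qed
  moreover have "(\<Sum>k=0..<h. w k) = Pc n h"
    by (simp add: Pc_def w_def sum.atLeast1_atMost_eq atLeast0LessThan)
  moreover have "(\<Sum>k=0..<h. g k) = c * real (h choose 4) + real h"
    using arg_cong[OF sum_choose_three_reversed[of h], of real]
    by (simp add: g_def sum.distrib atLeast0LessThan flip: sum_distrib_left)
  ultimately have "Pc n h * (c * real (h choose 4) + real h) \<le> real h * expected_cost n h"
    using mult_left_mono[of "\<Sum>k=0..<h. w k * g k" "expected_cost n h" "real h"]
    by (simp add: sum_negf)
  then have "Pc n h * (c * real h ^ 4 / 256) \<le> real h * expected_cost n h"
    using mult_left_mono[OF choose_four_lower_bound[OF c, of h] Pc_nonneg[of n h]] by linarith
  also have "Pc n h * (c * real h ^ 4 / 256) = real h * (1 / 256 * ((Pc n h)\<^sup>2 * real n * (real h)\<^sup>2))"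
    using h by (simp add: c_def power2_eq_square power4_eq_xxxx)
  finally show ?thesis
    using h by simp
qed

end

theorem lemma4p3:
  shows "\<exists>c1 c2 :: real. c1 > 0 \<and> c2 > 0 \<and>
    (\<forall>n h :: nat. n \<ge> 1 \<longrightarrow> h \<ge> 1 \<longrightarrow>
       c1 * ((Pc n h)\<^sup>2 * real n * (real h)\<^sup>2) \<le> expected_cost n h \<and>
       expected_cost n h \<le> c2 * ((Pc n h)\<^sup>2 * real n * (real h)\<^sup>2))"
proof (rule exI[of _ "1 / 256"], rule exI[of _ 3], intro conjI allI impI)
  fix n h :: nat
  assume "n \<ge> 1" "h \<ge> 1"
  then show "1 / 256 * ((Pc n h)\<^sup>2 * real n * (real h)\<^sup>2) \<le> expected_cost n h"
    and "expected_cost n h \<le> 3 * ((Pc n h)\<^sup>2 * real n * (real h)\<^sup>2)"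
    by (rule expected_cost_lower, rule expected_cost_upper)
qed simp_all

end
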